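(* There is a constant $c$ independent of $f$ and $n$ such that for all integers $n\ge 2$ the operator norm of $S_n: C(\overline{\Omega}_H)\to C(\overline{\Omega}_H)$ (with respect to the uniform norm on $\overline{\Omega}_H$) satisfies $$\|S_n\|_\infty\le c(\log n)^3 .$$
   Context: Let $\mathbb R^4_H=\{\mathbf t\in\mathbb R^4: t_1+t_2+t_3+t_4=0\}$, equipped with its 3-dimensional Lebesgue measure $d\mathbf t$, and $\mathbb Z^4_H=\mathbb Z^4\cap\mathbb R^4_H$. Let $\Omega_H=\{\mathbf t\in\mathbb R^4_H: -1<t_i-t_j\le 1,\ 1\le i<j\le 4\}$ (a rhombic dodecahedron, of volume $2$), with closure $\overline\Omega_H$. A function $f$ on $\mathbb R^4_H$ is called $H$-periodic if $f(\mathbf t+\mathbf k)=f(\mathbf t)$ for all $\mathbf k\in\mathbb Z^4_H$; functions on $\overline\Omega_H$ are identified with their $H$-periodic extensions. Let $\mathbb H=\{\mathbf k\in\mathbb Z^4_H: k_1\equiv k_2\equiv k_3\equiv k_4 \pmod 4\}$, $\phi_{\mathbf k}(\mathbf t)=e^{\frac{\pi i}{2}\mathbf k\cdot\mathbf t}$, and $\langle f,g\rangle=\frac12\int_{\Omega_H}f(\mathbf t)\overline{g(\mathbf t)}\,d\mathbf t$. Let $\mathbb H_n^*=\{\mathbf k\in\mathbb H: -4n\le k_i-k_j\le 4n,\ 1\le i<j\le 4\}$. The dodecahedral Fourier partial sum is $S_nf(\mathbf t)=\sum_{\mathbf k\in\mathbb H_n^*}\langle f,\phi_{\mathbf k}\rangle\phi_{\mathbf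 k}(\mathbf t)$. *)

theory Defs
  imports "HOL-Analysis.Analysis"
begin

definition idx_pairs :: "(4 \<times> 4) list" where
  "idx_pairs = [(1,2),(1,3),(1,4),(2,3),(2,4),(3,4)]"

definition RH :: "(real^4) set" where
  "RH = {t. (\<Sum>i\<in>UNIV. t$i) = 0}"

definition ZH :: "(int^4) set" where
  "ZH = {k. (\<Sum>i\<in>UNIV. k$i) = 0}"

definition vec_of_int :: "int^4 \<Rightarrow> real^4" where
  "vec_of_int k = (\<chi> i. real_of_int (k$i))"

definition OmegaH :: "(real^4) set" where
  "OmegaH = {t \<in> RH. \<forall>(i,j)\<in>set idx_pairs. -1 < t$i - t$j \<and> t$i - t$j \<le> 1}"

definition H_periodic :: "(real^4 \<Rightarrow> complex) \<Rightarrow> bool" where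
  "H_periodic f \<longleftrightarrow> (\<forall>t\<in>RH. \<forall>k\<in>ZH. f (t + vec_of_int k) = f t)"

definition Hlat :: "(int^4) set" where
  "Hlat = {k \<in> ZH. \<forall>i j. k$i mod 4 = k$j mod 4}"

definition phi :: "int^4 \<Rightarrow> real^4 \<Rightarrow> complex" where
  "phi k t = exp (complex_of_real (pi / 2 * (\<Sum>i\<in>UNIV. real_of_int (k$i) * t$i)) * \<i>)"

text \<open>The 3-dimensional
  Lebesgue (Hausdorff) measure dt on R^4_H is 2 times the push-forward of Lebesgue
  measure on R^3 under this map (Jacobian factor sqrt 4 = 2); with it vol(Omega_H) = 2.\<close>
definition hparam :: "real \<times> real \<times> real \<Rightarrow> real^4" where
  "hparam x = (case x of (a,b,c) \<Rightarrow> vector [a, b, c, -(a+b+c)])"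

definition H_inner :: "(real^4 \<Rightarrow> complex) \<Rightarrow> (real^4 \<Rightarrow> complex) \<Rightarrow> complex" where
  "H_inner f g = (1/2) * integral {x. hparam x \<in> OmegaH}
      (\<lambda>x. 2 * (f (hparam x) * cnj (g (hparam x))))"

definition HnStar :: "nat \<Rightarrow> (int^4) set" where
  "HnStar n = {k \<in> Hlat. \<forall>(i,j)\<in>set idx_pairs.
                 - 4 * int n \<le> k$i - k$j \<and> k$i - k$j \<le> 4 * int n}"

definition Sn :: "nat \<Rightarrow> (real^4 \<Rightarrow> complex) \<Rightarrow> real^4 \<Rightarrow> complex" where
  "Sn n f t = (\<Sum>k\<in>HnStar n. H_inner f (phi k) * phi k t)"

end

theory Submission
  imports Defs
begin

text \<open>Writing \<open>k \<in> H\<^sub>n\<^sup>*\<close> as \<open>k = 4c - (\<Sum>\<^sub>l c\<^sub>l)(1,1,1,1)\<close>, with \<open>j\<close> the first index at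
  which \<open>k\<close> is minimal, splits the Dirichlet kernel \<open>\<Sum>\<^bsub>k\<in>H\<^sub>n\<^sup>*\<^esub> \<phi>\<^sub>k(y)\<close> into four
  products \<open>\<Prod>\<^sub>i E\<^sub>j\<^sub>i(y\<^sub>i)\<close> of one-dimensional exponential sums over integer intervals of
  length at most \<open>n\<close>, with \<open>E\<^sub>j\<^sub>j = 1\<close>. Such a sum is bounded by about \<open>min(n, 1/dist(x,\<int>))\<close>,
  so its integral over any window of length 2 is \<open>O(log n)\<close>. \<open>S\<^sub>nf(t)\<close> is the integral of \<open>f\<close>
  against the kernel at \<open>t - y\<close> over \<open>\<Omega>\<^sub>H\<close>, which lies in the cube \<open>[-1,1]\<^sup>3\<close> of the coordinates
  \<open>y\<^sub>1,y\<^sub>2,y\<^sub>3\<close>. In each product the three non-trivial factors depend on three of the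
  linear forms \<open>y\<^sub>1, y\<^sub>2, y\<^sub>3, y\<^sub>4 = -(y\<^sub>1+y\<^sub>2+y\<^sub>3)\<close>, so integrating one coordinate at a
  time bounds the integral by \<open>O((log n)\<^sup>3)\<close>.\<close>

section \<open>One-dimensional exponential sums\<close>

definition exp_sum :: "int set \<Rightarrow> real \<Rightarrow> complex" where
  "exp_sum S x = (\<Sum>c\<in>S. exp (complex_of_real (2*pi*(of_int c * x)) * \<i>))"

lemma continuous_on_exp_sum: "continuous_on A (exp_sum S)"
  unfolding exp_sum_def by (intro continuous_intros)

lemma continuous_on_norm_exp_sum: "continuous_on A (\<lambda>x. cmod (exp_sum S x))"
  by (intro continuous_intros continuous_on_exp_sum)

lemma norm_exp_real_times_i [simp]: "cmod (exp (complex_of_real a * \<i>)) = 1"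
  by (metis mult.commute norm_exp_i_times)

lemma exp_sum_add_of_int: "exp_sum S (x + of_int m) = exp_sum S x"
  unfolding exp_sum_def
proof (intro sum.cong refl)
  fix c
  have "exp (complex_of_real (2*pi*(of_int c * (x + of_int m))) * \<i>)
      = exp (complex_of_real (2*pi*(of_int c * x)) * \<i>) * exp ((2 * of_int (c*m) * pi) * \<i>)"
    by (simp add: exp_add[symmetric] algebra_simps)
  also have "exp ((2 * of_int (c*m) * pi) * \<i>) = 1"
    by (rule exp_integer_2pi) simp
  finally show "exp (complex_of_real (2*pi*(of_int c * (x + of_int m))) * \<i>)
      = exp (complex_of_real (2*pi*(of_int c * x)) * \<i>)" by simp
qed

lemma norm_exp_sum_le_card: "finite S \<Longrightarrow> cmod (exp_sum S x) \<le> card S"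
  unfolding exp_sum_def
  using norm_sum[of "\<lambda>c. exp (complex_of_real (2*pi*(of_int c * x)) * \<i>)" S] by simp

lemma sin_ge_third:
  assumes "0 \<le> y" "y \<le> pi/2"
  shows "y/3 \<le> sin y"
proof -
  have "\<bar>sin y - (\<Sum>m<3. sin_coeff m * y ^ m)\<bar> \<le> inverse (fact 3) * \<bar>y\<bar> ^ 3"
    by (rule Maclaurin_sin_bound)
  moreover have "(\<Sum>m<3. sin_coeff m * y ^ m) = y"
    by (simp add: eval_nat_numeral sin_coeff_def lessThan_Suc)
  ultimately have "\<bar>sin y - y\<bar> \<le> y^3/6"
    using assms by (simp add: eval_nat_numeral)
  then have "y - y^3/6 \<le> sin y"
    using abs_le_D2 by (metis minus_diff_eq diff_le_eq add.commute)
  moreover have "y^3/6 \<le> 2*y/3"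
  proof -
    have "y \<le> 2"
      using assms pi_less_4 by linarith
    then have "y*y \<le> 4"
      using assms mult_mono[of y 2 y 2] by simp
    then show ?thesis
      using assms mult_right_mono[of "y*y" 4 y] by (simp add: eval_nat_numeral)
  qed
  ultimately show ?thesis
    by linarith
qed

lemma abs_le_abs_sin_pi_times:
  assumes "\<bar>x\<bar> \<le> 1/2"
  shows "\<bar>x\<bar> \<le> \<bar>sin (pi * x)\<bar>"
proof -
  have "pi * \<bar>x\<bar> / 3 \<le> sin (pi * \<bar>x\<bar>)"
    using assms by (intro sin_ge_third) auto
  moreover have "3 * \<bar>x\<bar> \<le> pi * \<bar>x\<bar>"
    using pi_gt3 by (intro mult_right_mono) auto
  moreover have "\<bar>sin (pi * x)\<bar> = \<bar>sin (pi * \<bar>x\<bar>)\<bar>"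
    by (cases "x \<ge> 0") (simp_all add: abs_of_neg)
  ultimately show ?thesis by linarith
qed

lemma norm_one_minus_exp_ge:
  assumes "\<bar>x\<bar> \<le> 1/2"
  shows "2 * \<bar>x\<bar> \<le> cmod (1 - exp (complex_of_real (2*pi*x) * \<i>))"
proof -
  have "cmod (1 - exp (complex_of_real (2*pi*x) * \<i>)) = 2 * \<bar>sin (pi * x)\<bar>"
    using dist_exp_i_1[of "2*pi*x"] by (simp add: norm_minus_commute mult.commute)
  then show ?thesis using abs_le_abs_sin_pi_times[OF assms] by simp
qed

lemma exp_sum_atLeastAtMost:
  "exp_sum {lo..hi} x = exp (complex_of_real (2*pi*(of_int lo * x)) * \<i>) *
      (\<Sum>m<nat (hi - lo + 1). exp (complex_of_real (2*pi*x) * \<i>) ^ m)"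
proof -
  have range: "{lo..hi} = (\<lambda>m. lo + int m) ` {..<nat (hi - lo + 1)}"
  proof (rule set_eqI, rule iffI)
    fix c assume "c \<in> {lo..hi}"
    then show "c \<in> (\<lambda>m. lo + int m) ` {..<nat (hi - lo + 1)}"
      by (intro image_eqI[of _ _ "nat (c - lo)"]) auto
  qed auto
  have "exp (complex_of_real (2*pi*(of_int (lo + int m) * x)) * \<i>)
      = exp (complex_of_real (2*pi*(of_int lo * x)) * \<i>) * exp (complex_of_real (2*pi*x) * \<i>) ^ m"
    for m
    by (simp add: exp_of_nat_mult[symmetric] exp_add[symmetric] algebra_simps)
  then show ?thesis
    unfolding exp_sum_def range
    by (subst sum.reindex) (auto simp: inj_on_def sum_distrib_left)
qed

lemma norm_exp_sum_atLeastAtMost_le: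
  assumes "0 < \<bar>x\<bar>" "\<bar>x\<bar> \<le> 1/2"
  shows "cmod (exp_sum {lo..hi} x) \<le> 1/\<bar>x\<bar>"
proof -
  let ?z = "exp (complex_of_real (2*pi*x) * \<i>)"
  let ?N = "nat (hi - lo + 1)"
  have lb: "2*\<bar>x\<bar> \<le> cmod (1 - ?z)" by (rule norm_one_minus_exp_ge[OF assms(2)])
  then have pos: "0 < cmod (1 - ?z)" using assms by linarith
  then have "?z \<noteq> 1" by auto
  then have "cmod (exp_sum {lo..hi} x) = cmod (1 - ?z ^ ?N) / cmod (1 - ?z)"
    unfolding exp_sum_atLeastAtMost by (simp add: norm_mult sum_gp_strict norm_divide)
  also have "\<dots> \<le> 2 / cmod (1 - ?z)"
    using norm_triangle_ineq4[of 1 "?z ^ ?N"] by (intro divide_right_mono) (auto simp: norm_power)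
  also have "\<dots> \<le> 2 / (2*\<bar>x\<bar>)"
    using lb assms pos by (intro divide_left_mono) auto
  finally show ?thesis by simp
qed

text \<open>Up to a factor 2 this is \<open>min (n + 1) (1/\<bar>x\<bar>)\<close>, in a form with the explicit antiderivative
  \<open>arsinh\<close>.\<close>

definition exp_sum_majorant :: "nat \<Rightarrow> real \<Rightarrow> real" where
  "exp_sum_majorant n x = 2 * (real n + 1) / sqrt (1 + (real n * x)^2)"

lemma exp_sum_majorant_nonneg: "0 \<le> exp_sum_majorant n x"
  by (simp add: exp_sum_majorant_def)

lemma norm_exp_sum_le_majorant:
  assumes "hi - lo \<le> int n" "\<bar>x\<bar> \<le> 1/2"
  shows "cmod (exp_sum {lo..hi} x) \<le> exp_sum_majorant n x"
proof -
  have "(real n * x)^2 = (real n * \<bar>x\<bar>)^2"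
    by (simp add: power_mult_distrib)
  then have "sqrt (1 + (real n * x)^2) \<le> sqrt ((1 + real n * \<bar>x\<bar>)^2)"
    by (intro real_sqrt_le_mono) (simp add: power2_sum)
  then have "2 * (real n + 1) / (1 + real n * \<bar>x\<bar>) \<le> exp_sum_majorant n x"
    unfolding exp_sum_majorant_def by (intro divide_left_mono) (auto intro!: mult_pos_pos add_pos_nonneg)
  moreover have "cmod (exp_sum {lo..hi} x) \<le> 2 * (real n + 1) / (1 + real n * \<bar>x\<bar>)"
  proof (cases "real n * \<bar>x\<bar> \<le> 1")
    case True
    have "cmod (exp_sum {lo..hi} x) \<le> real n + 1"
      using norm_exp_sum_le_card[of "{lo..hi}" x] assms(1) by simp
    also have "\<dots> \<le> 2 * (real n + 1) / (1 + real n * \<bar>x\<bar>)"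
      using True mult_left_mono[of "1 + real n * \<bar>x\<bar>" 2 "real n + 1"]
      by (subst pos_le_divide_eq) (auto simp: mult.commute intro: add_pos_nonneg)
    finally show ?thesis .
  next
    case False
    then have "0 < \<bar>x\<bar>" "0 < real n"
      by (auto intro: ccontr)
    then have "cmod (exp_sum {lo..hi} x) \<le> 1 / \<bar>x\<bar>"
      using norm_exp_sum_atLeastAtMost_le assms(2) by blast
    also have "\<dots> \<le> 2 * (real n + 1) / (1 + real n * \<bar>x\<bar>)"
      using False \<open>0 < \<bar>x\<bar>\<close> by (simp add: field_simps)
    finally show ?thesis .
  qed
  ultimately show ?thesis by linarith
qed

lemma norm_exp_sum_le_sum_majorant:
  assumes "hi - lo \<le> int n" "\<bar>x\<bar> \<le> 4"
  shows "cmod (exp_sum {lo..hi} x) \<le> (\<Sum>r\<in>{-4..4::int}. exp_sum_majorant n (x - of_int r))"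
proof -
  have near: "\<bar>x - of_int (round x)\<bar> \<le> 1/2"
    using of_int_round_abs_le[of x] by linarith
  then have "round x \<in> {-4..4}"
    using assms(2) by (simp add: abs_le_iff, linarith)
  moreover have "exp_sum {lo..hi} x = exp_sum {lo..hi} (x - of_int (round x))"
    using exp_sum_add_of_int[of _ "x - of_int (round x)" "round x"] by simp
  ultimately show ?thesis
    using norm_exp_sum_le_majorant[OF assms(1) near]
    by (auto intro!: order.trans[OF _ member_le_sum] exp_sum_majorant_nonneg)
qed

lemma exp_sum_majorant_has_integral:
  assumes "1 \<le> n"
  shows "((\<lambda>u. exp_sum_majorant n (s + u)) has_integral
     2 * (real n + 1) / real n * (arsinh (real n * (s + 1)) - arsinh (real n * (s - 1)))) {-1..1}"
proof -
  define F where "F u = 2 * (real n + 1) / real n * arsinh (real n * (s + u))" for u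
  have "(F has_real_derivative exp_sum_majorant n (s + u)) (at u within {-1..1})" for u
  proof -
    have "((\<lambda>u. arsinh (real n * (s + u))) has_real_derivative
        1 / sqrt ((real n * (s + u))^2 + 1) * real n) (at u within {-1..1})"
      by (rule DERIV_chain2[OF arsinh_real_has_field_derivative]) (auto intro!: derivative_eq_intros)
    then have "(F has_real_derivative 2 * (real n + 1) / real n *
        (1 / sqrt ((real n * (s + u))^2 + 1) * real n)) (at u within {-1..1})"
      unfolding F_def by (rule DERIV_cmult)
    then show ?thesis
      using assms by (simp add: exp_sum_majorant_def add.commute)
  qed
  then have "((\<lambda>u. exp_sum_majorant n (s + u)) has_integral F 1 - F (-1)) {-1..1}"
    by (intro fundamental_theorem_of_calculus) (auto simp: has_real_derivative_iff_has_vector_derivative)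
  then show ?thesis by (simp add: F_def right_diff_distrib)
qed

lemma arsinh_le_iff_real [simp]: "arsinh x \<le> arsinh y \<longleftrightarrow> x \<le> (y::real)"
  by (simp add: not_less[symmetric])

lemma arsinh_le_ln:
  assumes "2 \<le> n"
  shows "arsinh (8 * real n) \<le> 6 * ln (real n)"
proof -
  have "sqrt ((8 * real n)^2 + 1) \<le> sqrt ((8 * real n + 1)^2)"
    by (rule real_sqrt_le_mono) (simp add: power2_sum)
  then have "arsinh (8 * real n) \<le> ln (16 * real n + 1)"
    using arsinh_real_aux[of "8 * real n"] by (simp add: arsinh_real_def)
  also have "\<dots> \<le> ln (real n ^ 6)"
  proof (subst ln_le_cancel_iff)
    have n2: "2 \<le> real n"
      using assms by simp
    then have "(2::real)^5 \<le> real n ^ 5"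
      by (intro power_mono) auto
    then have "32 * real n \<le> real n ^ 5 * real n"
      using n2 by (intro mult_right_mono) auto
    moreover have "real n ^ 6 = real n ^ 5 * real n"
      by (simp add: power_Suc2[symmetric])
    ultimately show "16 * real n + 1 \<le> real n ^ 6"
      using n2 by linarith
  qed (use assms in auto)
  also have "\<dots> = 6 * ln (real n)"
    using assms by (simp add: ln_realpow)
  finally show ?thesis .
qed

lemma arsinh_window_le:
  assumes "2 \<le> n" "\<bar>v\<bar> \<le> 7"
  shows "2 * (real n + 1) / real n * (arsinh (real n * (v + 1)) - arsinh (real n * (v - 1)))
    \<le> 6 * arsinh (8 * real n)"
proof -
  have "real n * (v + 1) \<le> real n * 8" "real n * (-8) \<le> real n * (v - 1)"
    using assms(2) by (intro mult_left_mono; simp)+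
  then have "arsinh (real n * (v + 1)) \<le> arsinh (8 * real n)"
    "arsinh (- (8 * real n)) \<le> arsinh (real n * (v - 1))"
    by (simp_all del: arsinh_minus_real add: mult.commute)
  then have "arsinh (real n * (v + 1)) - arsinh (real n * (v - 1)) \<le> 2 * arsinh (8 * real n)"
    using arsinh_minus_real[of "8 * real n"] by linarith
  moreover have "arsinh (real n * (v - 1)) \<le> arsinh (real n * (v + 1))"
    by (simp add: mult_left_mono)
  moreover have "2 * (real n + 1) / real n \<le> 3"
    using assms(1) by (simp add: field_simps)
  ultimately have "2 * (real n + 1) / real n * (arsinh (real n * (v + 1)) - arsinh (real n * (v - 1)))
    \<le> 3 * (2 * arsinh (8 * real n))"
    by (intro mult_mono) (auto simp del: arsinh_le_iff_real)
  then show ?thesis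
    by simp
qed

lemma integral_norm_exp_sum_le:
  assumes n: "2 \<le> n" and len: "hi - lo \<le> int n" and s: "\<bar>s\<bar> \<le> 3"
  shows "integral {-1..1} (\<lambda>u. cmod (exp_sum {lo..hi} (s + u))) \<le> 324 * ln (real n)"
proof -
  define I where "I r = 2 * (real n + 1) / real n *
      (arsinh (real n * (s - of_int r + 1)) - arsinh (real n * (s - of_int r - 1)))" for r :: int
  have majorant: "((\<lambda>u. \<Sum>r\<in>{-4..4::int}. exp_sum_majorant n (s - of_int r + u))
      has_integral (\<Sum>r\<in>{-4..4::int}. I r)) {-1..1}"
    unfolding I_def using n by (intro has_integral_sum exp_sum_majorant_has_integral) auto
  have "integral {-1..1} (\<lambda>u. cmod (exp_sum {lo..hi} (s + u))) \<le> (\<Sum>r\<in>{-4..4::int}. I r)"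
  proof (rule has_integral_le[OF integrable_integral majorant])
    show "(\<lambda>u. cmod (exp_sum {lo..hi} (s + u))) integrable_on {-1..1}"
      by (intro integrable_continuous_interval continuous_intros
                continuous_on_compose2[OF continuous_on_exp_sum[of UNIV]]) auto
    fix u :: real assume "u \<in> {-1..1}"
    then have "\<bar>s + u\<bar> \<le> 4"
      using s by auto
    then show "cmod (exp_sum {lo..hi} (s + u)) \<le> (\<Sum>r\<in>{-4..4::int}. exp_sum_majorant n (s - of_int r + u))"
      using norm_exp_sum_le_sum_majorant[OF len] by (simp add: algebra_simps)
  qed
  also have "\<dots> \<le> (\<Sum>r\<in>{-4..4::int}. 6 * arsinh (8 * real n))"
    unfolding I_def using s n by (intro sum_mono arsinh_window_le) auto
  also have "\<dots> \<le> 54 * (6 * ln (real n))"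
    using arsinh_le_ln[OF n] by simp
  finally show ?thesis by simp
qed

section \<open>Splitting the Dirichlet kernel of \<open>HnStar n\<close>\<close>

lemma idx_pairs_abs_le_iff:
  fixes x :: "'a::linordered_idom^4"
  shows "(\<forall>(i,j)\<in>set idx_pairs. -b \<le> x$i - x$j \<and> x$i - x$j \<le> b) \<longleftrightarrow> (\<forall>i j. \<bar>x$i - x$j\<bar> \<le> b)"
proof
  assume "\<forall>(i,j)\<in>set idx_pairs. -b \<le> x$i - x$j \<and> x$i - x$j \<le> b"
  then have h: "\<bar>x$1 - x$2\<bar> \<le> b" "\<bar>x$1 - x$3\<bar> \<le> b" "\<bar>x$1 - x$4\<bar> \<le> b"
     "\<bar>x$2 - x$3\<bar> \<le> b" "\<bar>x$2 - x$4\<bar> \<le> b" "\<bar>x$3 - x$4\<bar> \<le> b"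
    unfolding idx_pairs_def by (simp_all add: abs_le_iff)
  then have "0 \<le> b"
    by (meson abs_ge_zero order_trans)
  show "\<forall>i j. \<bar>x$i - x$j\<bar> \<le> b"
  proof (intro allI)
    fix i j :: 4
    show "\<bar>x$i - x$j\<bar> \<le> b"
      using exhaust_4[of i] exhaust_4[of j] h \<open>0 \<le> b\<close>
      by (elim disjE) (simp_all add: abs_minus_commute)
  qed
next
  assume "\<forall>i j. \<bar>x$i - x$j\<bar> \<le> b"
  then have "-b \<le> x$i - x$j \<and> x$i - x$j \<le> b" for i j
    by (metis abs_le_iff minus_le_iff)
  then show "\<forall>(i,j)\<in>set idx_pairs. -b \<le> x$i - x$j \<and> x$i - x$j \<le> b"
    by blast
qed

lemma mem_HnStar_iff:
  "k \<in> HnStar n \<longleftrightarrow> (\<Sum>i\<in>UNIV. k$i) = 0 \<and> (\<forall>i j. k$i mod 4 = k$j mod 4)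
     \<and> (\<forall>i j. \<bar>k$i - k$j\<bar> \<le> 4 * int n)"
  unfolding HnStar_def Hlat_def ZH_def mem_Collect_eq idx_pairs_abs_le_iff[symmetric] by auto

text \<open>Every \<open>k \<in> HnStar n\<close> is \<open>lattice_point c\<close> for exactly one pair \<open>(j, c)\<close> with
  \<open>c \<in> Pi\<^sub>E UNIV (coord_range n j)\<close>: \<open>j\<close> is the first index at which \<open>k\<close> is minimal and
  \<open>c i = (k$i - k$j) div 4\<close>.\<close>

definition coord_range :: "nat \<Rightarrow> 4 \<Rightarrow> 4 \<Rightarrow> int set" where
  "coord_range n j i = (if i = j then {0} else if i < j then {1..int n} else {0..int n})"

definition lattice_point :: "(4 \<Rightarrow> int) \<Rightarrow> int^4" where
  "lattice_point c = (\<chi> i. 4 * c i - (\<Sum>l\<in>UNIV. c l))"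

lemma finite_coord_range [simp]: "finite (coord_range n j i)"
  by (simp add: coord_range_def)

lemma coord_range_bounds: "c \<in> coord_range n j i \<Longrightarrow> 0 \<le> c \<and> c \<le> int n"
  by (auto simp: coord_range_def split: if_splits)

lemma phi_lattice_point:
  assumes "y \<in> RH"
  shows "phi (lattice_point c) y = (\<Prod>i\<in>UNIV. exp (complex_of_real (2*pi*(of_int (c i) * y$i)) * \<i>))"
proof -
  have "(\<Sum>i\<in>UNIV. real_of_int (lattice_point c $ i) * y$i)
      = (\<Sum>i\<in>UNIV. 4 * (real_of_int (c i) * y$i) - real_of_int (\<Sum>l\<in>UNIV. c l) * y$i)"
    by (simp add: lattice_point_def algebra_simps)
  also have "\<dots> = 4 * (\<Sum>i\<in>UNIV. real_of_int (c i) * y$i) - real_of_int (\<Sum>l\<in>UNIV. c l) * (\<Sum>i\<in>UNIV. y$i)"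
    by (simp add: sum_subtractf sum_distrib_left)
  also have "\<dots> = 4 * (\<Sum>i\<in>UNIV. real_of_int (c i) * y$i)"
    using assms by (simp add: RH_def)
  finally have "phi (lattice_point c) y = exp (\<Sum>i\<in>UNIV. complex_of_real (2*pi*(of_int (c i) * y$i)) * \<i>)"
    unfolding phi_def by (simp add: sum_distrib_left sum_distrib_right mult_ac)
  then show ?thesis
    by (simp add: exp_sum)
qed

lemma lattice_point_inj:
  assumes c: "c \<in> Pi\<^sub>E UNIV (coord_range n j)" and c': "c' \<in> Pi\<^sub>E UNIV (coord_range n j')"
    and eq: "lattice_point c = lattice_point c'"
  shows "j = j' \<and> c = c'"
proof -
  define d where "d = (\<Sum>l\<in>UNIV. c l) - (\<Sum>l\<in>UNIV. c' l)"
  have diff: "4 * (c i - c' i) = d" for i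
    using arg_cong[OF eq, of "\<lambda>k. k $ i"] unfolding d_def lattice_point_def by simp
  have range: "c i \<in> coord_range n j i" "c' i \<in> coord_range n j' i" for i
    using c c' by auto
  have "c j = 0" "c' j' = 0"
    using range(1)[of j] range(2)[of j'] by (simp_all add: coord_range_def)
  moreover have "0 \<le> c' j" "0 \<le> c j'"
    using coord_range_bounds[OF range(2)] coord_range_bounds[OF range(1)] by blast+
  ultimately have "d = 0"
    using diff[of j] diff[of j'] by (smt (verit))
  then have same: "c = c'"
    using diff by (intro ext) simp
  have "j = j'"
  proof (rule ccontr)
    assume "j \<noteq> j'"
    then consider "j < j'" | "j' < j"
      by (meson neq_iff)
    then show False
      using range[of j] range[of j'] \<open>c j = 0\<close> \<open>c' j' = 0\<close> \<open>j \<noteq> j'\<close> unfolding same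
      by cases (auto simp: coord_range_def)
  qed
  with same show ?thesis by simp
qed

lemma lattice_point_in_HnStar:
  assumes "c \<in> Pi\<^sub>E UNIV (coord_range n j)"
  shows "lattice_point c \<in> HnStar n"
  unfolding mem_HnStar_iff
proof (intro conjI allI)
  show "(\<Sum>i\<in>UNIV. lattice_point c $ i) = 0"
    by (simp add: lattice_point_def sum_subtractf sum_distrib_left)
  fix i l
  show "lattice_point c $ i mod 4 = lattice_point c $ l mod 4"
    by (simp add: lattice_point_def mod_diff_eq[symmetric])
  show "\<bar>lattice_point c $ i - lattice_point c $ l\<bar> \<le> 4 * int n"
    using assms coord_range_bounds[of "c i" n j i] coord_range_bounds[of "c l" n j l]
    by (auto simp: lattice_point_def abs_le_iff PiE_iff)
qed

lemma first_argminE: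
  fixes f :: "'a::{finite,wellorder} \<Rightarrow> 'b::linorder"
  obtains j where "\<And>i. f j \<le> f i" "\<And>i. i < j \<Longrightarrow> f j < f i"
proof -
  define m where "m = Min (range f)"
  have min: "m \<le> f i" for i
    unfolding m_def by (intro Min_le) auto
  have "m \<in> range f"
    unfolding m_def by (intro Min_in) auto
  then have "\<exists>i. f i = m"
    by auto
  define j where "j = (LEAST i. f i = m)"
  have fj: "f j = m"
    unfolding j_def using \<open>\<exists>i. f i = m\<close> by (rule LeastI_ex)
  show ?thesis
  proof (rule that)
    show "f j \<le> f i" for i
      using min fj by simp
    show "f j < f i" if "i < j" for i
    proof -
      have "f i \<noteq> m"
        using that not_less_Least unfolding j_def by blast
      then show ?thesis
        using min[of i] fj by (simp add: order_less_le)
    qed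
  qed
qed

lemma HnStar_eq_lattice_point:
  assumes "k \<in> HnStar n"
  obtains j c where "c \<in> Pi\<^sub>E UNIV (coord_range n j)" "k = lattice_point c"
proof -
  have sum0: "(\<Sum>i\<in>UNIV. k$i) = 0" and congr: "\<And>i j. k$i mod 4 = k$j mod 4"
    and width: "\<And>i j. \<bar>k$i - k$j\<bar> \<le> 4 * int n"
    using assms by (auto simp: mem_HnStar_iff)
  obtain j where min: "\<And>i. k$j \<le> k$i" and before_j: "\<And>i. i < j \<Longrightarrow> k$j < k$i"
    using first_argminE[of "\<lambda>i. k$i"] by blast
  define c where "c i = (k$i - k$j) div 4" for i
  have c: "4 * c i = k$i - k$j" for i
    using congr[of i j] unfolding c_def by (simp add: mod_eq_dvd_iff)
  have "c i \<in> coord_range n j i" for i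
  proof -
    have "0 \<le> c i" "c i \<le> int n"
      using c[of i] min[of i] width[of i j] by (auto simp: abs_le_iff)
    moreover have "c j = 0"
      using c[of j] by simp
    moreover have "c i \<noteq> 0" if "i < j"
      using before_j[OF that] c[of i] by auto
    ultimately show ?thesis
      by (auto simp: coord_range_def)
  qed
  then have "c \<in> Pi\<^sub>E UNIV (coord_range n j)"
    by auto
  moreover have "4 * (\<Sum>l\<in>UNIV. c l) = (\<Sum>l\<in>UNIV. k$l - k$j)"
    by (simp add: sum_distrib_left c)
  then have "(\<Sum>l\<in>UNIV. c l) = - k$j"
    using sum0 by (simp add: sum_subtractf)
  then have "k = lattice_point c"
    by (simp add: lattice_point_def vec_eq_iff c)
  ultimately show ?thesis
    by (rule that)
qed

lemma bij_betw_lattice_point: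
  "bij_betw (\<lambda>(j, c). lattice_point c) (SIGMA j:UNIV. Pi\<^sub>E UNIV (coord_range n j)) (HnStar n)"
proof (rule bij_betwI')
  fix p q assume p: "p \<in> (SIGMA j:UNIV. Pi\<^sub>E UNIV (coord_range n j))"
    and q: "q \<in> (SIGMA j:UNIV. Pi\<^sub>E UNIV (coord_range n j))"
  obtain j c j' c' where pq: "p = (j, c)" "q = (j', c')"
    by fastforce
  with p q have "c \<in> Pi\<^sub>E UNIV (coord_range n j)" "c' \<in> Pi\<^sub>E UNIV (coord_range n j')"
    by (simp_all only: mem_Sigma_iff)
  from lattice_point_inj[OF this]
  show "((\<lambda>(j, c). lattice_point c) p = (\<lambda>(j, c). lattice_point c) q) = (p = q)"
    unfolding pq by auto
next
  fix p assume "p \<in> (SIGMA j:UNIV. Pi\<^sub>E UNIV (coord_range n j))"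
  then show "(\<lambda>(j, c). lattice_point c) p \<in> HnStar n"
    by (auto intro: lattice_point_in_HnStar)
next
  fix k assume "k \<in> HnStar n"
  then obtain j c where "c \<in> Pi\<^sub>E UNIV (coord_range n j)" "k = lattice_point c"
    by (rule HnStar_eq_lattice_point)
  then show "\<exists>p\<in>(SIGMA j:UNIV. Pi\<^sub>E UNIV (coord_range n j)). k = (\<lambda>(j, c). lattice_point c) p"
    by auto
qed

lemma finite_HnStar: "finite (HnStar n)"
proof -
  have "finite (SIGMA j:UNIV. Pi\<^sub>E UNIV (coord_range n j))"
    by (intro finite_SigmaI finite_PiE) auto
  then show ?thesis
    using bij_betw_finite[OF bij_betw_lattice_point] by blast
qed

lemma sum_phi_HnStar:
  assumes "y \<in> RH"
  shows "(\<Sum>k\<in>HnStar n. phi k y) = (\<Sum>j\<in>UNIV. \<Prod>i\<in>UNIV. exp_sum (coord_range n j i) (y$i))"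
proof -
  have "(\<Sum>j\<in>UNIV. \<Prod>i\<in>UNIV. exp_sum (coord_range n j i) (y$i))
     = (\<Sum>j\<in>UNIV. \<Sum>c\<in>Pi\<^sub>E UNIV (coord_range n j). phi (lattice_point c) y)"
    unfolding exp_sum_def phi_lattice_point[OF assms] by (intro sum.cong refl prod_sum_PiE) auto
  also have "\<dots> = (\<Sum>(j, c)\<in>(SIGMA j:UNIV. Pi\<^sub>E UNIV (coord_range n j)). phi (lattice_point c) y)"
    by (subst sum.Sigma) (auto simp: finite_PiE)
  also have "\<dots> = (\<Sum>k\<in>HnStar n. phi k y)"
    using sum.reindex_bij_betw[OF bij_betw_lattice_point, of "\<lambda>k. phi k y"] by (simp add: split_def)
  finally show ?thesis by simp
qed

section \<open>Iterated integrals over the cube\<close>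

lemma integral_prod_le_integral:
  fixes F :: "'a::euclidean_space \<times> 'b::euclidean_space \<Rightarrow> real"
  assumes "continuous_on (cbox (a,c) (b,d)) F" "\<phi> integrable_on cbox a b"
    and "\<And>x. x \<in> cbox a b \<Longrightarrow> integral (cbox c d) (\<lambda>y. F (x,y)) \<le> \<phi> x"
  shows "integral (cbox (a,c) (b,d)) F \<le> integral (cbox a b) \<phi>"
  using integral_le[OF integral_integrable_2dim[OF assms(1)] assms(2,3)]
  by (simp add: integral_prod_continuous[OF assms(1)])

lemma integral_prod_assoc:
  fixes f :: "('a::euclidean_space \<times> 'b::euclidean_space) \<times> 'c::euclidean_space \<Rightarrow> 'd::banach"
  assumes "continuous_on (cbox ((a1,a2),a3) ((b1,b2),b3)) f"
  shows "integral (cbox ((a1,a2),a3) ((b1,b2),b3)) f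
       = integral (cbox (a1,a2,a3) (b1,b2,b3)) (\<lambda>(x,y,z). f ((x,y),z))"
proof -
  let ?g = "\<lambda>(x::'a,y::'b,z::'c). ((x,y),z)"
  let ?h = "\<lambda>((x::'a,y::'b),z::'c). (x,y,z)"
  have box_g: "?g ` cbox (u1,u2,u3) (v1,v2,v3) = cbox ((u1,u2),u3) ((v1,v2),v3)" for u1 u2 u3 v1 v2 v3
    by (force simp: cbox_Pair_eq image_iff)
  have box_h: "?h ` cbox ((u1,u2),u3) ((v1,v2),v3) = cbox (u1,u2,u3) (v1,v2,v3)" for u1 u2 u3 v1 v2 v3
    by (force simp: cbox_Pair_eq image_iff)
  have "((\<lambda>p. f (?g p)) has_integral (1/1) *\<^sub>R integral (cbox ((a1,a2),a3) ((b1,b2),b3)) f)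
      (?h ` cbox ((a1,a2),a3) ((b1,b2),b3))"
  proof (rule has_integral_twiddle[where r = 1])
    show "\<exists>w z. ?g ` cbox u v = cbox w z" for u v
      using box_g by (metis prod.collapse)
    show "\<exists>w z. ?h ` cbox u v = cbox w z" for u v
      using box_h by (metis prod.collapse)
    show "Henstock_Kurzweil_Integration.content (?g ` cbox u v)
        = 1 * Henstock_Kurzweil_Integration.content (cbox u v)" for u v
      using box_g[of "fst u" "fst (snd u)" "snd (snd u)" "fst v" "fst (snd v)" "snd (snd v)"]
      by (cases u, cases v) (simp add: content_Pair)
    show "continuous (at x) ?g" for x
      unfolding split_def by (intro continuous_intros)
    show "(f has_integral integral (cbox ((a1,a2),a3) ((b1,b2),b3)) f) (cbox ((a1,a2),a3) ((b1,b2),b3))"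
      using assms by (intro integrable_integral integrable_continuous)
  qed auto
  then have "((\<lambda>p. f (?g p)) has_integral integral (cbox ((a1,a2),a3) ((b1,b2),b3)) f)
      (cbox (a1,a2,a3) (b1,b2,b3))"
    unfolding box_h by simp
  from integral_unique[OF this] show ?thesis
    by (simp add: split_def)
qed

abbreviation cube :: "(real \<times> real \<times> real) set" where
  "cube \<equiv> cbox (-1, -1, -1) (1, 1, 1)"

lemma integral_cube_rotate:
  fixes F :: "real \<Rightarrow> real \<Rightarrow> real \<Rightarrow> real"
  assumes "continuous_on UNIV (\<lambda>(a,b,c). F a b c)"
  shows "integral cube (\<lambda>(a,b,c). F a b c) = integral cube (\<lambda>(a,b,c). F c a b)"
proof -
  have "continuous_on S ((\<lambda>(a,b,c). F a b c) \<circ> (\<lambda>((b,c),a). (a,b,c)))" for S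
    by (intro continuous_on_compose continuous_on_subset[OF assms]) (auto simp: split_def intro!: continuous_intros)
  then have cont: "continuous_on S (\<lambda>((b,c),a). F a b c)" for S
    by (simp add: o_def split_def)
  have "integral cube (\<lambda>(a,b,c). F a b c)
      = integral (cbox ((-1,-1),-1) ((1,1),1)) (\<lambda>((b,c),a). F a b c)"
    using integral_swap_2dim[of "-1" "(-1,-1)" 1 "(1,1)" "\<lambda>a (b,c). F a b c"]
      continuous_on_subset[OF assms] by (simp add: split_def)
  also have "\<dots> = integral cube (\<lambda>(a,b,c). F c a b)"
    by (subst integral_prod_assoc[OF cont]) (simp add: split_def)
  finally show ?thesis .
qed

lemma integral_const_mult_le:
  fixes f :: "real \<Rightarrow> real"
  assumes "continuous_on {a..b} f" "integral {a..b} f \<le> A" "0 \<le> K"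
  shows "integral {a..b} (\<lambda>x. K * f x) \<le> K * A"
  using assms mult_left_mono[OF assms(2,3)] by (simp add: integrable_continuous_interval)

lemma integral_square_product_le:
  fixes Q :: "real \<Rightarrow> real" and R :: "real \<Rightarrow> real \<Rightarrow> real"
  assumes cont: "continuous_on UNIV Q" "continuous_on UNIV (\<lambda>(b,c). R b c)"
    and nonneg: "\<And>x. 0 \<le> Q x" "\<And>b c. 0 \<le> R b c" "0 \<le> K"
    and int: "integral {-1..1} Q \<le> A" "\<And>b. b \<in> {-1..1} \<Longrightarrow> integral {-1..1} (R b) \<le> A"
  shows "integral (cbox (-1,-1) (1,1)) (\<lambda>(b,c). K * Q b * R b c) \<le> K * A^2"
proof -
  have cont_Q: "continuous_on {-1..1} Q"
    using cont(1) by (rule continuous_on_subset) simp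
  have "0 \<le> integral {-1..1} Q"
    using nonneg(1) cont_Q by (intro integral_nonneg integrable_continuous_interval) auto
  with int(1) have "0 \<le> A"
    by linarith
  have cont_R: "continuous_on S (\<lambda>x. R (f x) (g x))"
    if "continuous_on S f" "continuous_on S g" for S and f g :: "'a::topological_space \<Rightarrow> real"
    using continuous_on_compose2[OF cont(2), of S "\<lambda>x. (f x, g x)"] that by (simp add: continuous_on_Pair)
  have "integral (cbox (-1,-1) (1,1)) (\<lambda>(b,c). K * Q b * R b c) \<le> integral (cbox (-1) 1) (\<lambda>b. (K * A) * Q b)"
  proof (rule integral_prod_le_integral)
    show "continuous_on (cbox (-1,-1) (1,1)) (\<lambda>(b,c). K * Q b * R b c)"
      unfolding split_def by (intro continuous_intros cont_R continuous_on_compose2[OF cont(1)]) auto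
    show "(\<lambda>b. (K * A) * Q b) integrable_on cbox (-1) 1"
      using cont_Q by (intro integrable_continuous continuous_intros) auto
    fix b :: real assume "b \<in> cbox (-1) 1"
    moreover have "continuous_on {-1..1} (R b)"
      using cont_R[of _ "\<lambda>_. b" "\<lambda>c. c"] by simp
    ultimately have "integral {-1..1} (\<lambda>c. K * Q b * R b c) \<le> K * Q b * A"
      using int(2)[of b] nonneg by (intro integral_const_mult_le) auto
    then show "integral (cbox (-1) 1) (\<lambda>c. case (b, c) of (b, c) \<Rightarrow> K * Q b * R b c) \<le> K * A * Q b"
      by (simp add: mult_ac)
  qed
  also have "\<dots> \<le> (K * A) * A"
    using integral_const_mult_le[OF cont_Q int(1)] nonneg(3) \<open>0 \<le> A\<close> by simp
  finally show ?thesis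
    by (simp add: power2_eq_square mult_ac)
qed

lemma integral_cube_product_le:
  fixes P Q :: "real \<Rightarrow> real" and R :: "real \<Rightarrow> real \<Rightarrow> real \<Rightarrow> real"
  assumes cont: "continuous_on UNIV P" "continuous_on UNIV Q" "continuous_on UNIV (\<lambda>(a,b,c). R a b c)"
    and nonneg: "\<And>x. 0 \<le> P x" "\<And>x. 0 \<le> Q x" "\<And>a b c. 0 \<le> R a b c"
    and int: "integral {-1..1} P \<le> A" "integral {-1..1} Q \<le> A"
      "\<And>a b. a \<in> {-1..1} \<Longrightarrow> b \<in> {-1..1} \<Longrightarrow> integral {-1..1} (R a b) \<le> A"
  shows "integral cube (\<lambda>(a,b,c). P a * Q b * R a b c) \<le> A^3"
proof -
  have cont_R: "continuous_on S (\<lambda>x. R (f x) (g x) (h x))"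
    if "continuous_on S f" "continuous_on S g" "continuous_on S h" for S and f g h :: "'a::topological_space \<Rightarrow> real"
    using continuous_on_compose2[OF cont(3), of S "\<lambda>x. (f x, g x, h x)"] that by (simp add: continuous_on_Pair)
  have "integral cube (\<lambda>(a,b,c). P a * Q b * R a b c) \<le> integral (cbox (-1) 1) (\<lambda>a. A^2 * P a)"
  proof (rule integral_prod_le_integral)
    show "continuous_on cube (\<lambda>(a,b,c). P a * Q b * R a b c)"
      unfolding split_def
      by (intro continuous_intros cont_R continuous_on_compose2[OF cont(1)] continuous_on_compose2[OF cont(2)]) auto
    show "(\<lambda>a. A^2 * P a) integrable_on cbox (-1) 1"
      by (intro integrable_continuous continuous_intros continuous_on_subset[OF cont(1)]) auto
    fix a :: real assume "a \<in> cbox (-1) 1"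
    moreover have "continuous_on UNIV (\<lambda>(b,c). R a b c)"
      unfolding split_def by (intro cont_R continuous_intros)
    ultimately have "integral (cbox (-1,-1) (1,1)) (\<lambda>(b,c). P a * Q b * R a b c) \<le> P a * A^2"
      using cont(2) nonneg int(2,3) by (intro integral_square_product_le) auto
    then show "integral (cbox (-1,-1) (1,1)) (\<lambda>y. case (a, y) of (a, b, c) \<Rightarrow> P a * Q b * R a b c)
        \<le> A^2 * P a"
      by (simp add: split_def mult_ac)
  qed
  also have "\<dots> \<le> A^2 * A"
    using integral_const_mult_le[OF continuous_on_subset[OF cont(1)] int(1)] by simp
  finally show ?thesis
    by (simp add: power3_eq_cube power2_eq_square)
qed

lemma hparam_nth:
  "hparam x $ 1 = fst x" "hparam x $ 2 = fst (snd x)" "hparam x $ 3 = snd (snd x)"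
  "hparam x $ 4 = -(fst x + fst (snd x) + snd (snd x))"
  by (simp_all add: hparam_def vector_def split_def)

lemma hparam_in_RH: "hparam x \<in> RH"
  by (simp add: RH_def sum_4 hparam_nth)

lemma diff_in_RH: "t \<in> RH \<Longrightarrow> u \<in> RH \<Longrightarrow> t - u \<in> RH"
  by (simp add: RH_def sum_subtractf)

lemma continuous_on_hparam: "continuous_on S hparam"
proof -
  have "continuous_on S (\<lambda>x. hparam x $ i)" for i
    using exhaust_4[of i] by (elim disjE; simp only: hparam_nth; intro continuous_intros)
  then have "continuous_on S (\<lambda>x. \<chi> i. hparam x $ i)"
    by (rule continuous_on_vec_lambda)
  then show ?thesis
    by (simp add: vec_lambda_eta)
qed

lemma prod_UNIV_4: "prod f (UNIV::4 set) = f 1 * f 2 * f 3 * f 4"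
  unfolding UNIV_4 by (simp add: ac_simps)

lemma integral_cube_kernel_factors_le:
  fixes g :: "4 \<Rightarrow> real \<Rightarrow> real" and t :: "real^4"
  assumes cont: "\<And>i. continuous_on UNIV (g i)" and nonneg: "\<And>i x. 0 \<le> g i x"
    and gj: "\<And>x. g j x = 1"
    and int_diff: "\<And>i. i \<noteq> j \<Longrightarrow> integral {-1..1} (\<lambda>a. g i (t$i - a)) \<le> A"
    and int_4: "\<And>v w. 4 \<noteq> j \<Longrightarrow> v \<in> {-1..1} \<Longrightarrow> w \<in> {-1..1} \<Longrightarrow>
      integral {-1..1} (\<lambda>u. g 4 (t$4 + (v + w + u))) \<le> A"
  shows "integral cube (\<lambda>(a,b,c). g 1 (t$1 - a) * g 2 (t$2 - b) * g 3 (t$3 - c) * g 4 (t$4 + (a + b + c)))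
    \<le> A^3" (is "integral cube (\<lambda>(a,b,c). ?F a b c) \<le> _")
proof -
  have cont_F: "continuous_on UNIV (\<lambda>(a,b,c). ?F a b c)" "continuous_on UNIV (\<lambda>(a,b,c). ?F c a b)"
    unfolding split_def by (intro continuous_intros continuous_on_compose2[OF cont]; simp)+
  have cont_diff: "continuous_on UNIV (\<lambda>a. g i (s - a))" for i s
    by (intro continuous_on_compose2[OF cont] continuous_intros) auto
  have cont_4: "continuous_on UNIV (\<lambda>(a,b,c). g 4 (t$4 + (a + b + c)))"
    unfolding split_def by (intro continuous_on_compose2[OF cont] continuous_intros) auto
  txt \<open>A cyclic change of the coordinate order puts the variable that occurs only in the factor
    \<open>g 4\<close> innermost.\<close>
  from exhaust_4[of j] consider "j = 1" | "j = 2" | "j = 3" | "j = 4" by blast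
  then show ?thesis
  proof cases
    case 1
    have "integral cube (\<lambda>(a,b,c). ?F a b c) = integral cube (\<lambda>(a,b,c). ?F c a b)"
      by (rule integral_cube_rotate[OF cont_F(1)])
    also have "\<dots> = integral cube (\<lambda>(a,b,c). g 2 (t$2 - a) * g 3 (t$3 - b) * g 4 (t$4 + (a + b + c)))"
      using 1 by (intro integral_cong) (auto simp: gj[unfolded 1] ac_simps)
    also have "\<dots> \<le> A^3"
      using 1 int_4 by (intro integral_cube_product_le cont_diff cont_4 nonneg int_diff) (auto simp: ac_simps)
    finally show ?thesis .
  next
    case 2
    have "integral cube (\<lambda>(a,b,c). ?F a b c) = integral cube (\<lambda>(a,b,c). ?F c a b)"
      by (rule integral_cube_rotate[OF cont_F(1)])
    also have "\<dots> = integral cube (\<lambda>(a,b,c). ?F b c a)"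
      by (rule integral_cube_rotate[of "\<lambda>a b c. ?F c a b", OF cont_F(2)])
    also have "\<dots> = integral cube (\<lambda>(a,b,c). g 3 (t$3 - a) * g 1 (t$1 - b) * g 4 (t$4 + (a + b + c)))"
      using 2 by (intro integral_cong) (auto simp: gj[unfolded 2] ac_simps)
    also have "\<dots> \<le> A^3"
      using 2 int_4 by (intro integral_cube_product_le cont_diff cont_4 nonneg int_diff) (auto simp: ac_simps)
    finally show ?thesis .
  next
    case 3
    have "integral cube (\<lambda>(a,b,c). ?F a b c)
        = integral cube (\<lambda>(a,b,c). g 1 (t$1 - a) * g 2 (t$2 - b) * g 4 (t$4 + (a + b + c)))"
      using 3 by (intro integral_cong) (auto simp: gj[unfolded 3])
    also have "\<dots> \<le> A^3"
      using 3 int_4 by (intro integral_cube_product_le cont_diff cont_4 nonneg int_diff) auto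
    finally show ?thesis .
  next
    case 4
    have "integral cube (\<lambda>(a,b,c). ?F a b c)
        = integral cube (\<lambda>(a,b,c). g 1 (t$1 - a) * g 2 (t$2 - b) * g 3 (t$3 - c))"
      using 4 by (intro integral_cong) (auto simp: gj[unfolded 4])
    also have "\<dots> \<le> A^3"
      using 4 by (intro integral_cube_product_le cont_diff nonneg int_diff)
        (auto simp: split_def intro!: continuous_on_compose2[OF cont] continuous_intros)
    finally show ?thesis .
  qed
qed

lemma integral_cube_kernel_product_le:
  fixes g :: "4 \<Rightarrow> real \<Rightarrow> real" and t :: "real^4"
  assumes cont: "\<And>i. continuous_on UNIV (g i)" and nonneg: "\<And>i x. 0 \<le> g i x"
    and window: "\<And>i s. i \<noteq> j \<Longrightarrow> \<bar>s\<bar> \<le> 3 \<Longrightarrow> integral {-1..1} (\<lambda>u. g i (s + u)) \<le> A"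
    and gj: "\<And>x. g j x = 1" and t: "\<And>i. \<bar>t$i\<bar> \<le> 3/4"
  shows "integral cube (\<lambda>x. \<Prod>i\<in>UNIV. g i ((t - hparam x)$i)) \<le> A^3"
proof -
  have "(\<lambda>x. \<Prod>i\<in>UNIV. g i ((t - hparam x)$i))
      = (\<lambda>(a,b,c). g 1 (t$1 - a) * g 2 (t$2 - b) * g 3 (t$3 - c) * g 4 (t$4 + (a + b + c)))"
    by (simp add: prod_UNIV_4 hparam_nth split_def algebra_simps)
  moreover have "integral {-1..1} (\<lambda>a. g i (t$i - a)) \<le> A" if "i \<noteq> j" for i
    using window[OF that, of "t$i"] t[of i]
      Henstock_Kurzweil_Integration.integral_reflect_real[of 1 "-1" "\<lambda>u. g i (t$i + u)"]
    by simp
  moreover have "integral {-1..1} (\<lambda>u. g 4 (t$4 + (v + w + u))) \<le> A"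
    if "4 \<noteq> j" "v \<in> {-1..1}" "w \<in> {-1..1}" for v w
  proof -
    have "\<bar>t$4 + v + w\<bar> \<le> 3"
      using that(2,3) t[of 4] by (auto simp: abs_le_iff)
    from window[OF that(1) this] show ?thesis
      by (simp add: add.assoc)
  qed
  ultimately show ?thesis
    using integral_cube_kernel_factors_le[of g j t A] cont nonneg gj by simp
qed

section \<open>The dodecahedron and the partial sums\<close>

lemma closure_OmegaH_subset:
  "closure OmegaH \<subseteq> {t. (\<Sum>i\<in>UNIV. t$i) = 0 \<and> (\<forall>i j. \<bar>t$i - t$j\<bar> \<le> 1)}"
proof (rule closure_minimal)
  show "OmegaH \<subseteq> {t. (\<Sum>i\<in>UNIV. t$i) = 0 \<and> (\<forall>i j. \<bar>t$i - t$j\<bar> \<le> 1)}"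
    unfolding OmegaH_def RH_def idx_pairs_abs_le_iff[symmetric] by fastforce
  show "closed {t::real^4. (\<Sum>i\<in>UNIV. t$i) = 0 \<and> (\<forall>i j. \<bar>t$i - t$j\<bar> \<le> 1)}"
    by (intro closed_Collect_conj closed_Collect_eq closed_Collect_all closed_Collect_le continuous_intros)
qed

lemma closure_OmegaH_subset_RH: "closure OmegaH \<subseteq> RH"
  using closure_OmegaH_subset by (auto simp: RH_def)

lemma abs_nth_le_of_closure_OmegaH:
  assumes "t \<in> closure OmegaH"
  shows "\<bar>t$k\<bar> \<le> 3/4"
proof -
  have "t$1 + t$2 + t$3 + t$4 = 0" and diff: "\<And>i j. \<bar>t$i - t$j\<bar> \<le> 1"
    using closure_OmegaH_subset assms by (auto simp: sum_4)
  moreover note diff[of 1 2] diff[of 1 3] diff[of 1 4] diff[of 2 3] diff[of 2 4] diff[of 3 4]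
  ultimately have "\<bar>t$1\<bar> \<le> 3/4" "\<bar>t$2\<bar> \<le> 3/4" "\<bar>t$3\<bar> \<le> 3/4" "\<bar>t$4\<bar> \<le> 3/4"
    unfolding abs_le_iff by linarith+
  then show ?thesis
    using exhaust_4[of k] by auto
qed

lemma compact_closure_OmegaH: "compact (closure OmegaH)"
proof -
  have "closure OmegaH \<subseteq> cbox (-1) 1"
  proof
    fix t assume "t \<in> closure OmegaH"
    then have "-1 \<le> t$i \<and> t$i \<le> 1" for i
      using abs_nth_le_of_closure_OmegaH[of t i] unfolding abs_le_iff by linarith
    then show "t \<in> cbox (-1) 1"
      by (simp add: mem_box_cart)
  qed
  then show ?thesis
    by (simp add: compact_eq_bounded_closed bounded_subset[OF bounded_cbox])
qed

abbreviation OmegaH_params :: "(real \<times> real \<times> real) set" where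
  "OmegaH_params \<equiv> {x. hparam x \<in> OmegaH}"

lemma OmegaH_params_subset_cube: "OmegaH_params \<subseteq> cube"
proof
  fix x assume "x \<in> OmegaH_params"
  then have "hparam x \<in> closure OmegaH"
    using closure_subset by auto
  then have "-1 \<le> hparam x $ i \<and> hparam x $ i \<le> 1" for i
    using abs_nth_le_of_closure_OmegaH[of "hparam x" i] unfolding abs_le_iff by linarith
  from this[of 1] this[of 2] this[of 3] show "x \<in> cube"
    by (cases x) (simp add: hparam_nth cbox_Pair_iff cbox_interval)
qed

lemma OmegaH_borel: "OmegaH \<in> sets borel"
proof -
  have "OmegaH = {t. (\<Sum>i\<in>UNIV. t$i) = 0 \<and>
      (\<forall>p\<in>set idx_pairs. -1 < t$(fst p) - t$(snd p) \<and> t$(fst p) - t$(snd p) \<le> 1)}"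
    unfolding OmegaH_def RH_def by (auto simp: split_beta)
  also have "\<dots> \<in> sets borel"
    by measurable
  finally show ?thesis .
qed

lemma OmegaH_params_lebesgue: "OmegaH_params \<in> sets lebesgue"
proof -
  have "hparam -` OmegaH \<inter> space borel \<in> sets borel"
    using borel_measurable_continuous_onI[OF continuous_on_hparam] OmegaH_borel by (rule measurable_sets)
  then show ?thesis
    by (intro sets_completionI_sets) (simp add: vimage_def)
qed

lemma integrable_on_OmegaH_params:
  fixes g :: "real \<times> real \<times> real \<Rightarrow> 'b::euclidean_space"
  assumes "continuous_on UNIV g"
  shows "g integrable_on OmegaH_params"
proof -
  have "g absolutely_integrable_on cube"
    by (rule absolutely_integrable_continuous[OF continuous_on_subset[OF assms]]) simp
  then have "g absolutely_integrable_on OmegaH_params"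
    by (rule set_integrable_subset[OF _ OmegaH_params_lebesgue OmegaH_params_subset_cube])
  then show ?thesis
    by (simp add: absolutely_integrable_on_def)
qed

lemma phi_diff: "phi k (t - u) = cnj (phi k u) * phi k t"
proof -
  define A where "A = (\<Sum>i\<in>UNIV. real_of_int (k$i) * t$i)"
  define B where "B = (\<Sum>i\<in>UNIV. real_of_int (k$i) * u$i)"
  have diff: "(\<Sum>i\<in>UNIV. real_of_int (k$i) * (t - u)$i) = A - B"
    unfolding A_def B_def by (simp add: right_diff_distrib sum_subtractf)
  show ?thesis
    unfolding phi_def A_def[symmetric] B_def[symmetric] diff
    by (simp add: exp_cnj mult_exp_exp algebra_simps, simp only: diff_divide_distrib)
qed

lemma Sn_eq_integral:
  assumes "continuous_on RH f"
  shows "Sn n f t = integral OmegaH_params (\<lambda>x. f (hparam x) * (\<Sum>k\<in>HnStar n. phi k (t - hparam x)))"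
proof -
  have cont_f: "continuous_on UNIV (\<lambda>x. f (hparam x))"
    by (rule continuous_on_compose2[OF assms continuous_on_hparam]) (auto simp: hparam_in_RH)
  have cont_phi: "continuous_on UNIV (\<lambda>x. phi k (hparam x))" for k
    unfolding phi_def by (intro continuous_intros continuous_on_compose2[OF continuous_on_hparam]) auto
  let ?g = "\<lambda>k x. f (hparam x) * cnj (phi k (hparam x))"
  have int_g: "?g k integrable_on OmegaH_params" for k
    by (intro integrable_on_OmegaH_params continuous_intros cont_f cont_phi)
  have "H_inner f (phi k) = integral OmegaH_params (?g k)" for k
    unfolding H_inner_def using integral_mult_right[of OmegaH_params 2 "?g k"] by simp
  then have "Sn n f t = (\<Sum>k\<in>HnStar n. integral OmegaH_params (?g k) * phi k t)"
    unfolding Sn_def by simp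
  also have "\<dots> = (\<Sum>k\<in>HnStar n. integral OmegaH_params (\<lambda>x. ?g k x * phi k t))"
    by (simp add: integral_mult_left)
  also have "\<dots> = integral OmegaH_params (\<lambda>x. \<Sum>k\<in>HnStar n. ?g k x * phi k t)"
    using int_g by (intro integral_sum[symmetric] finite_HnStar) (auto intro: integrable_on_mult_left)
  also have "\<dots> = integral OmegaH_params (\<lambda>x. f (hparam x) * (\<Sum>k\<in>HnStar n. phi k (t - hparam x)))"
    by (simp add: phi_diff sum_distrib_left mult_ac)
  finally show ?thesis .
qed

lemma norm_sum_phi_HnStar_le:
  assumes "y \<in> RH"
  shows "cmod (\<Sum>k\<in>HnStar n. phi k y) \<le> (\<Sum>j\<in>UNIV. \<Prod>i\<in>UNIV. cmod (exp_sum (coord_range n j i) (y$i)))"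
  unfolding sum_phi_HnStar[OF assms] using norm_sum by (simp add: prod_norm)

lemma integral_norm_exp_sum_coord_range_le:
  assumes "2 \<le> n" "i \<noteq> j" "\<bar>s\<bar> \<le> 3"
  shows "integral {-1..1} (\<lambda>u. cmod (exp_sum (coord_range n j i) (s + u))) \<le> 324 * ln (real n)"
proof -
  have "coord_range n j i = {(if i < j then 1 else 0)..int n}"
    using assms(2) by (simp add: coord_range_def)
  then show ?thesis
    using integral_norm_exp_sum_le[OF assms(1) _ assms(3)] by simp
qed

lemma integral_cube_norm_kernel_le:
  assumes "2 \<le> n" and t: "t \<in> closure OmegaH"
  shows "integral cube (\<lambda>x. \<Sum>j\<in>UNIV. \<Prod>i\<in>UNIV. cmod (exp_sum (coord_range n j i) ((t - hparam x)$i)))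
    \<le> 4 * (324 * ln (real n))^3"
proof -
  let ?g = "\<lambda>j i x. cmod (exp_sum (coord_range n j i) x)"
  have cont: "continuous_on UNIV (\<lambda>x. \<Prod>i\<in>UNIV. ?g j i ((t - hparam x)$i))" for j
    by (intro continuous_intros continuous_on_compose2[OF continuous_on_norm_exp_sum]
        continuous_on_hparam) auto
  have "integral cube (\<lambda>x. \<Sum>j\<in>UNIV. \<Prod>i\<in>UNIV. ?g j i ((t - hparam x)$i))
      = (\<Sum>j\<in>UNIV. integral cube (\<lambda>x. \<Prod>i\<in>UNIV. ?g j i ((t - hparam x)$i)))"
    using cont by (intro integral_sum integrable_continuous) (auto intro: continuous_on_subset)
  also have "\<dots> \<le> (\<Sum>j\<in>(UNIV::4 set). (324 * ln (real n))^3)"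
  proof (rule sum_mono, rule integral_cube_kernel_product_le)
    fix j i :: 4 and s :: real
    show "continuous_on UNIV (?g j i)"
      by (rule continuous_on_norm_exp_sum)
    show "0 \<le> ?g j i s"
      by simp
    show "integral {-1..1} (\<lambda>u. ?g j i (s + u)) \<le> 324 * ln (real n)" if "i \<noteq> j" "\<bar>s\<bar> \<le> 3"
      using integral_norm_exp_sum_coord_range_le[OF assms(1) that] .
    show "?g j j s = 1"
      by (simp add: coord_range_def exp_sum_def)
    show "\<bar>t$i\<bar> \<le> 3/4"
      by (rule abs_nth_le_of_closure_OmegaH[OF t])
  qed
  finally show ?thesis
    by simp
qed

lemma norm_Sn_integrand_le:
  assumes "t \<in> RH" "x \<in> OmegaH_params" "\<And>s. s \<in> closure OmegaH \<Longrightarrow> cmod (f s) \<le> M" "0 \<le> M"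
  shows "cmod (f (hparam x) * (\<Sum>k\<in>HnStar n. phi k (t - hparam x)))
    \<le> M * (\<Sum>j\<in>UNIV. \<Prod>i\<in>UNIV. cmod (exp_sum (coord_range n j i) ((t - hparam x)$i)))"
proof -
  have "cmod (f (hparam x)) \<le> M"
    using assms(2) closure_subset by (intro assms(3)) auto
  moreover have "cmod (\<Sum>k\<in>HnStar n. phi k (t - hparam x))
      \<le> (\<Sum>j\<in>UNIV. \<Prod>i\<in>UNIV. cmod (exp_sum (coord_range n j i) ((t - hparam x)$i)))"
    using assms(1) by (intro norm_sum_phi_HnStar_le diff_in_RH hparam_in_RH)
  ultimately show ?thesis
    unfolding norm_mult using assms(4) by (intro mult_mono) auto
qed

lemma norm_Sn_le:
  assumes n: "2 \<le> n" and f: "continuous_on RH f" and M: "\<And>s. s \<in> closure OmegaH \<Longrightarrow> cmod (f s) \<le> M"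
    and t: "t \<in> closure OmegaH"
  shows "cmod (Sn n f t) \<le> 4 * (324 * ln (real n))^3 * M"
proof -
  let ?D = "\<lambda>x. \<Sum>k\<in>HnStar n. phi k (t - hparam x)"
  let ?K = "\<lambda>x. \<Sum>j\<in>UNIV. \<Prod>i\<in>UNIV. cmod (exp_sum (coord_range n j i) ((t - hparam x)$i))"
  have "0 \<le> M"
    using M[OF t] norm_ge_zero order_trans by blast
  have cont_f: "continuous_on UNIV (\<lambda>x. f (hparam x))"
    by (rule continuous_on_compose2[OF f continuous_on_hparam]) (auto simp: hparam_in_RH)
  have cont_D: "continuous_on UNIV ?D"
    unfolding phi_def by (intro continuous_intros continuous_on_hparam)
  have cont_K: "continuous_on UNIV (\<lambda>x. M * ?K x)"
    by (intro continuous_intros continuous_on_compose2[OF continuous_on_norm_exp_sum]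
        continuous_on_hparam) auto
  have bound: "cmod (f (hparam x) * ?D x) \<le> M * ?K x" if "x \<in> OmegaH_params" for x
    using that t closure_OmegaH_subset_RH \<open>0 \<le> M\<close> by (intro norm_Sn_integrand_le M) auto
  have "cmod (Sn n f t) \<le> integral OmegaH_params (\<lambda>x. M * ?K x)"
    unfolding Sn_eq_integral[OF f] using bound
    by (intro integral_norm_bound_integral integrable_on_OmegaH_params continuous_intros
        cont_f cont_D cont_K)
  also have "\<dots> \<le> integral cube (\<lambda>x. M * ?K x)"
    using \<open>0 \<le> M\<close>
    by (intro integral_subset_le OmegaH_params_subset_cube integrable_on_OmegaH_params cont_K
        integrable_continuous continuous_on_subset[OF cont_K] subset_UNIV)
      (auto intro!: mult_nonneg_nonneg sum_nonneg prod_nonneg)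
  also have "\<dots> \<le> M * (4 * (324 * ln (real n))^3)"
    using integral_cube_norm_kernel_le[OF n t] \<open>0 \<le> M\<close> by (simp add: mult_left_mono)
  finally show ?thesis
    by (simp add: mult_ac)
qed

lemma bdd_above_norm_closure_OmegaH:
  assumes "continuous_on RH f"
  shows "bdd_above ((\<lambda>s. cmod (f s)) ` closure OmegaH)"
proof -
  have "continuous_on (closure OmegaH) (\<lambda>s. cmod (f s))"
    using continuous_on_subset[OF assms closure_OmegaH_subset_RH] by (intro continuous_intros)
  then show ?thesis
    using compact_closure_OmegaH
    by (intro bounded_imp_bdd_above compact_imp_bounded compact_continuous_image)
qed

theorem theorem3p11:
  "\<exists>c::real. \<forall>n::nat. n \<ge> 2 \<longrightarrow>
     (\<forall>f. continuous_on RH f \<and> H_periodic f \<longrightarrow>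
        (\<forall>t\<in>closure OmegaH.
           cmod (Sn n f t) \<le> c * (ln (real n)) ^ 3 * (SUP s\<in>closure OmegaH. cmod (f s))))"
proof (intro exI[of _ "4 * 324^3"] allI impI ballI)
  fix n :: nat and f :: "real^4 \<Rightarrow> complex" and t :: "real^4"
  assume n: "2 \<le> n" and f: "continuous_on RH f \<and> H_periodic f" and t: "t \<in> closure OmegaH"
  have "cmod (f s) \<le> (SUP s\<in>closure OmegaH. cmod (f s))" if "s \<in> closure OmegaH" for s
    using bdd_above_norm_closure_OmegaH f that by (intro cSUP_upper) auto
  from norm_Sn_le[OF n _ this t] f
  show "cmod (Sn n f t) \<le> 4 * 324^3 * (ln (real n))^3 * (SUP s\<in>closure OmegaH. cmod (f s))"
    by (simp add: power_mult_distrib mult_ac)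
qed

end
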